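(* Let $n\ge 3$, and consider a 3-SAT instance on $n$ variables together with its associated system (S). Then: (a) (S) has a rational feasible solution; (b) if the 3-SAT formula $C_1\wedge\cdots\wedge C_m$ is satisfiable, then (S) has a rational feasible solution of encoding size at most $4n+\mathcal{L}$, where $\mathcal{L}$ is a constant independent of $n$ and of the instance; (c) if the formula is not satisfiable, then every rational feasible solution of (S) has encoding size at least $2^n$.
   Context: Let $h(y) := 2y_1^3 + y_2^3 - 6y_1y_2 + 4$ and $R_\gamma := [1.259-\gamma,1.26]\times[1.587,1.59]$. Let $D\subseteq\mathbb{R}\times\mathbb{R}^n$ be the set of $(s,d)$ with $0\le d_1\le\frac12$, $0\le d_k\le d_{k-1}^2$ ($k=2,\dots,n$), $0\le s\le d_n^2$. A 3-SAT instance consists of Boolean variables $w_1,\dots,w_n$ and clauses $C_1,\dots,C_m$, each a disjunction of three literals (a literal is some $w_j$ or its negation $\bar w_j$). To the literal $w_j$ associate the real variable $x_j$ and to $\bar w_j$ the real variable $x_{n+j}$. For clause $C_i$ denote by $x_{i_1},x_{i_2},x_{i_3}$ the variables associated with its three literals. System (S) has variables $x\in\mathbb{R}^{2n}$, $\gamma,\Delta,s\in\mathbb{R}$, $y\in\mathbb{R}^2$, $d\in\mathbb{R}^n$, and constraints: $-1\le x_j\le 1$ for $j\in[2n]$; $x_j+x_{n+j}=0$ for $j\in[n]$; $x_{i_1}+x_{i_2}+x_{i_3}\ge -1-\Delta$ for each clause $C_i$; $\gamma\ge 0$, $0\le\Delta\le 2$, $\Delta+\gamma/2\le 2$; $y\in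 R_\gamma$; $(s,d)\in D$; and $-n^5\sum_{j=1}^n x_j^2 + h(y) - s\le -n^6$. Size means binary encoding length of the rational vector. *)

theory Defs
  imports Complex_Main
begin

text \<open>A literal is a pair (j, b) with j in 1..n: b = True stands for w_j,
  b = False for the negation of w_j.\<close>

type_synonym literal = "nat \<times> bool"
type_synonym clause = "literal \<times> literal \<times> literal"

definition lit_var :: "nat \<Rightarrow> literal \<Rightarrow> nat" where
  "lit_var n l = (if snd l then fst l else n + fst l)"

definition lit_ok :: "nat \<Rightarrow> literal \<Rightarrow> bool" where
  "lit_ok n l \<longleftrightarrow> fst l \<in> {1..n}"

definition instance_ok :: "nat \<Rightarrow> clause list \<Rightarrow> bool" where
  "instance_ok n cls \<longleftrightarrow>
     (\<forall>(l1, l2, l3) \<in> set cls. lit_ok n l1 \<and> lit_ok n l2 \<and> lit_ok n l3)"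

definition lit_true :: "(nat \<Rightarrow> bool) \<Rightarrow> literal \<Rightarrow> bool" where
  "lit_true a l \<longleftrightarrow> (if snd l then a (fst l) else \<not> a (fst l))"

definition satisfiable :: "clause list \<Rightarrow> bool" where
  "satisfiable cls \<longleftrightarrow> (\<exists>a. \<forall>(l1, l2, l3) \<in> set cls.
      lit_true a l1 \<or> lit_true a l2 \<or> lit_true a l3)"

definition h :: "real \<Rightarrow> real \<Rightarrow> real" where
  "h y1 y2 = 2 * y1 ^ 3 + y2 ^ 3 - 6 * y1 * y2 + 4"

definition in_R :: "real \<Rightarrow> real \<Rightarrow> real \<Rightarrow> bool" where
  "in_R \<gamma> y1 y2 \<longleftrightarrow> 1.259 - \<gamma> \<le> y1 \<and> y1 \<le> 1.26 \<and> 1.587 \<le> y2 \<and> y2 \<le> 1.59"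

definition in_D :: "nat \<Rightarrow> real \<Rightarrow> (nat \<Rightarrow> real) \<Rightarrow> bool" where
  "in_D n s d \<longleftrightarrow> 0 \<le> d 1 \<and> d 1 \<le> 1/2 \<and>
     (\<forall>k \<in> {2..n}. 0 \<le> d k \<and> d k \<le> (d (k - 1))\<^sup>2) \<and>
     0 \<le> s \<and> s \<le> (d n)\<^sup>2"

text \<open>System (S).  x is indexed by 1..2n, d by 1..n; other values are irrelevant.\<close>
definition feasible_S ::
  "nat \<Rightarrow> clause list \<Rightarrow> (nat \<Rightarrow> real) \<Rightarrow> real \<Rightarrow> real \<Rightarrow> real \<Rightarrow> real \<Rightarrow> real \<Rightarrow> (nat \<Rightarrow> real) \<Rightarrow> bool"
  where
  "feasible_S n cls x \<gamma> \<Delta> s y1 y2 d \<longleftrightarrow>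
     (\<forall>j \<in> {1..2*n}. -1 \<le> x j \<and> x j \<le> 1) \<and>
     (\<forall>j \<in> {1..n}. x j + x (n + j) = 0) \<and>
     (\<forall>(l1, l2, l3) \<in> set cls.
        x (lit_var n l1) + x (lit_var n l2) + x (lit_var n l3) \<ge> -1 - \<Delta>) \<and>
     \<gamma> \<ge> 0 \<and> 0 \<le> \<Delta> \<and> \<Delta> \<le> 2 \<and> \<Delta> + \<gamma> / 2 \<le> 2 \<and>
     in_R \<gamma> y1 y2 \<and> in_D n s d \<and>
     - ((real n) ^ 5 * (\<Sum>j = 1..n. (x j)\<^sup>2)) + h y1 y2 - s \<le> - ((real n) ^ 6)"

definition feasible_Q ::
  "nat \<Rightarrow> clause list \<Rightarrow> (nat \<Rightarrow> rat) \<Rightarrow> rat \<Rightarrow> rat \<Rightarrow> rat \<Rightarrow> rat \<Rightarrow> rat \<Rightarrow> (nat \<Rightarrow> rat) \<Rightarrow> bool"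
  where
  "feasible_Q n cls x \<gamma> \<Delta> s y1 y2 d \<longleftrightarrow>
     feasible_S n cls (\<lambda>j. of_rat (x j)) (of_rat \<gamma>) (of_rat \<Delta>) (of_rat s)
       (of_rat y1) (of_rat y2) (\<lambda>k. of_rat (d k))"

definition rat_size :: "rat \<Rightarrow> nat" where
  "rat_size r = (case quotient_of r of (p, q) \<Rightarrow>
      nat \<lceil>log 2 (real_of_int (\<bar>p\<bar> + 1))\<rceil> + nat \<lceil>log 2 (real_of_int q)\<rceil>)"

definition sol_size ::
  "nat \<Rightarrow> (nat \<Rightarrow> rat) \<Rightarrow> rat \<Rightarrow> rat \<Rightarrow> rat \<Rightarrow> rat \<Rightarrow> rat \<Rightarrow> (nat \<Rightarrow> rat) \<Rightarrow> nat" where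
  "sol_size n x \<gamma> \<Delta> s y1 y2 d =
     (\<Sum>j = 1..2*n. rat_size (x j)) + rat_size \<gamma> + rat_size \<Delta> + rat_size s
     + rat_size y1 + rat_size y2 + (\<Sum>k = 1..n. rat_size (d k))"

end

theory Submission
  imports Defs
begin

text \<open>
  If \<open>s = 0\<close>, the last constraint of (S) forces \<open>h(y) \<le> 0\<close> and \<open>x\<^sub>j\<^sup>2 \<approx> 1\<close> for all \<open>j\<close>.  For
  \<open>y\<^sub>1 \<ge> 0\<close> the identity \<open>h(t, r\<^sup>2) = 2(t - r)\<^sup>2(t + 2r) + (r\<^sup>3 - 2)\<^sup>2\<close> then gives \<open>y\<^sub>1\<^sup>3 = 2\<close>,
  impossible over \<rat>.  For \<open>y\<^sub>1 < 0\<close> one needs \<open>\<gamma> > 1.259\<close>, hence \<open>\<Delta> < 1.38\<close>; but the signs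
  of \<open>x\<close> define an assignment, which for an unsatisfiable instance violates some clause, and
  the three entries of \<open>x\<close> in that clause are all \<open>\<le> -0.846\<close>.  So unsatisfiability forces
  \<open>0 < s \<le> 2\<^bsup>-2\<^sup>n\<^esup>\<close>, and the denominator of \<open>s\<close> alone has \<open>2\<^sup>n\<close> bits.
  Conversely, a satisfying assignment, as a \<open>\<plusminus>1\<close> vector, is feasible with \<open>\<Delta> = 0\<close>; this leaves
  room for \<open>y\<^sub>1 < 0\<close>, where \<open>h < 0\<close>, so \<open>s = d = 0\<close> works and the solution is short.  Mere
  feasibility comes from \<open>\<Delta> = 2\<close>, \<open>y = (q, q\<^sup>2)\<close> with \<open>q\<close> a rational near \<open>\<root>3 2\<close>, and
  \<open>d\<^sub>k = 2\<^bsup>-2\<^sup>k\<^sup>-\<^sup>1\<^esup>\<close>.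
\<close>

lemma rat_cube_neq_two: "(q::rat) ^ 3 \<noteq> 2"
proof
  assume q3: "q ^ 3 = 2"
  obtain p r where qr: "quotient_of q = (p, r)" by (cases "quotient_of q")
  have r0: "r > 0" using quotient_of_denom_pos[OF qr] .
  have cop: "coprime p r" using quotient_of_coprime[OF qr] .
  have "(of_int p / of_int r :: rat) ^ 3 = 2" using q3 quotient_of_div[OF qr] by simp
  then have "(of_int p) ^ 3 = (2::rat) * (of_int r) ^ 3" using r0
    by (simp add: power_divide field_simps)
  then have e: "p ^ 3 = 2 * r ^ 3"
    by (metis (mono_tags) of_int_eq_iff of_int_mult of_int_numeral of_int_power)
  then have "even (p ^ 3)" by simp
  then have "even p" by simp
  then obtain k where k: "p = 2 * k" by blast
  have "r ^ 3 = 4 * k ^ 3" using e k by (simp add: power_mult_distrib)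
  then have "even (r ^ 3)" by simp
  then have "even r" by simp
  with \<open>even p\<close> cop show False by (metis coprime_common_divisor odd_one)
qed

lemma h_sum_of_squares: "h t (r ^ 2) = 2 * (t - r) ^ 2 * (t + 2 * r) + (r ^ 3 - 2) ^ 2"
  unfolding h_def by (simp add: algebra_simps power2_eq_square power3_eq_cube)

lemma h_nonpos_imp_cube_eq_two:
  assumes "0 \<le> t" "0 \<le> u" "h t u \<le> 0"
  shows "t ^ 3 = 2"
proof -
  define r where "r = sqrt u"
  have r: "0 \<le> r" "u = r ^ 2" using assms(2) by (simp_all add: r_def)
  have nonneg: "0 \<le> 2 * (t - r) ^ 2 * (t + 2 * r)" using assms(1) r by simp
  have "h t u = 2 * (t - r) ^ 2 * (t + 2 * r) + (r ^ 3 - 2) ^ 2"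
    using h_sum_of_squares r by simp
  then have "(r ^ 3 - 2) ^ 2 = 0" and "2 * (t - r) ^ 2 * (t + 2 * r) = 0"
    using nonneg assms(3) by (smt (verit) zero_le_power2)+
  then have "r ^ 3 = 2" and "t = r \<or> t + 2 * r = 0" by simp_all
  moreover from this have "0 < r" using r by (cases "r = 0") auto
  ultimately show ?thesis using assms(1) by auto
qed

lemma h_ge_of_nonpos:
  assumes "-2.741 \<le> t" "t \<le> 0" "0 \<le> u"
  shows "-37.2 \<le> h t u"
proof -
  have "(-t) ^ 3 \<le> 2.741 ^ 3" using assms by (intro power_mono) auto
  then have "-20.6 \<le> t ^ 3" by (simp add: power3_eq_cube)
  moreover have "t * u \<le> 0" using assms by (simp add: mult_nonpos_nonneg)
  moreover have "0 \<le> u ^ 3" using assms by simp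
  ultimately show ?thesis unfolding h_def by linarith
qed

lemma power_two_power_pred_square:
  "1 \<le> k \<Longrightarrow> (x ^ 2 ^ (k - 1)) ^ 2 = (x :: 'a :: monoid_mult) ^ 2 ^ k"
  by (cases k) (simp_all flip: power_mult add: mult.commute)

lemma in_D_d_bounds:
  assumes "in_D n s d" "k \<in> {1..n}"
  shows "0 \<le> d k \<and> d k \<le> (1/2) ^ 2 ^ (k - 1)"
  using assms(2)
proof (induction k)
  case (Suc k)
  show ?case
  proof (cases "k = 0")
    case True
    then show ?thesis using assms(1) by (simp add: in_D_def)
  next
    case False
    then have "0 \<le> d k \<and> d k \<le> (1/2) ^ 2 ^ (k - 1)" using Suc by simp
    then have "(d k) ^ 2 \<le> (1/2) ^ 2 ^ k"
      using power_two_power_pred_square[of k "1/2::real"] False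
      by (metis One_nat_def Suc_leI neq0_conv power_mono)
    moreover have "Suc k \<in> {2..n}" using False Suc.prems by auto
    ultimately show ?thesis using assms(1) unfolding in_D_def by fastforce
  qed
qed simp

lemma in_D_s_le:
  assumes "in_D n s d" "1 \<le> n"
  shows "s \<le> (1/2) ^ 2 ^ n"
proof -
  have "(d n) ^ 2 \<le> ((1/2) ^ 2 ^ (n - 1)) ^ 2"
    using in_D_d_bounds[OF assms(1), of n] assms(2) by (simp add: power_mono)
  then show ?thesis
    using assms power_two_power_pred_square[of n "1/2::real"] unfolding in_D_def by simp
qed

lemma in_D_double_exp:
  assumes "1 \<le> n"
  shows "in_D n ((1/2) ^ 2 ^ n) (\<lambda>k. (1/2) ^ 2 ^ (k - 1))"
  unfolding in_D_def
proof (intro conjI ballI)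
  fix k assume "k \<in> {2..n}"
  then have "1 \<le> k - 1" by auto
  then show "(1/2::real) ^ 2 ^ (k - 1) \<le> ((1/2) ^ 2 ^ (k - 1 - 1)) ^ 2"
    by (simp only: power_two_power_pred_square)
qed (use assms power_two_power_pred_square[of n "1/2::real"] in simp_all)

lemma rat_cube_root_two_approx:
  fixes e :: real
  assumes "0 < e"
  shows "\<exists>r \<in> \<rat>. 1.2598 \<le> r \<and> r \<le> 1.26 \<and> \<bar>r ^ 3 - 2\<bar> \<le> e"
proof -
  define c where "c = root 3 (2::real)"
  have c3: "c ^ 3 = 2" unfolding c_def by (simp add: real_root_pow_pos2)
  have "0 < c" unfolding c_def by simp
  have c_ub: "c < 1.25995"
  proof (rule ccontr)
    assume "\<not> c < 1.25995"
    then have "(1.25995::real) ^ 3 \<le> c ^ 3" by (intro power_mono) auto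
    with c3 show False by (simp add: power3_eq_cube)
  qed
  have c_lb: "1.2598 < c"
  proof (rule ccontr)
    assume "\<not> 1.2598 < c"
    then have "c ^ 3 \<le> (1.2598::real) ^ 3" using \<open>0 < c\<close> by (intro power_mono) auto
    with c3 show False by (simp add: power3_eq_cube)
  qed
  define \<eta> where "\<eta> = min (e / 5) 0.00001"
  have "0 < \<eta>" using assms by (simp add: \<eta>_def)
  obtain r where "r \<in> \<rat>" "c < r" "r < c + \<eta>" using Rats_dense_in_real[of c "c + \<eta>"] \<open>0 < \<eta>\<close> by auto
  have r: "1.2598 \<le> r" "r \<le> 1.26" using \<open>c < r\<close> \<open>r < c + \<eta>\<close> c_lb c_ub by (auto simp: \<eta>_def)
  have factor: "r ^ 3 - 2 = (r - c) * (r ^ 2 + r * c + c ^ 2)" using c3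
    by (simp add: algebra_simps power2_eq_square power3_eq_cube)
  have "r ^ 2 + r * c + c ^ 2 \<le> 5"
  proof -
    have "r ^ 2 \<le> 1.26 ^ 2" using r by (intro power_mono) auto
    moreover have "c ^ 2 \<le> 1.26 ^ 2" using c_ub \<open>0 < c\<close> by (intro power_mono) auto
    moreover have "r * c \<le> 1.26 * 1.26" using r c_ub \<open>0 < c\<close> by (intro mult_mono) auto
    ultimately show ?thesis by (simp add: power2_eq_square)
  qed
  moreover have "0 \<le> r ^ 2 + r * c + c ^ 2" using r \<open>0 < c\<close> by simp
  ultimately have "0 \<le> r ^ 3 - 2 \<and> r ^ 3 - 2 \<le> \<eta> * 5"
    unfolding factor using \<open>c < r\<close> \<open>r < c + \<eta>\<close> by (auto intro: mult_mono)
  moreover have "\<eta> \<le> e / 5" unfolding \<eta>_def by (rule min.cobounded1)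
  ultimately have "\<bar>r ^ 3 - 2\<bar> \<le> e" by (simp only: abs_of_nonneg) linarith
  then show ?thesis using r \<open>r \<in> \<rat>\<close> by blast
qed

lemma rat_size_ge_of_le_inverse_power:
  assumes "0 < r" "(of_rat r :: real) \<le> 1 / 2 ^ m"
  shows "m \<le> rat_size r"
proof -
  obtain p q where pq: "quotient_of r = (p, q)" by (cases "quotient_of r")
  have "0 < q" using quotient_of_denom_pos[OF pq] .
  have r_eq: "r = of_int p / of_int q" using quotient_of_div[OF pq] .
  then have "0 < p" using \<open>0 < r\<close> \<open>0 < q\<close> by (simp add: zero_less_divide_iff)
  have "(of_int p / of_int q :: real) \<le> 1 / 2 ^ m" using assms(2) by (simp add: r_eq of_rat_divide)
  then have "2 ^ m * of_int p \<le> (of_int q :: real)" using \<open>0 < q\<close> by (simp add: field_simps)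
  moreover have "(2::real) ^ m \<le> 2 ^ m * of_int p" using \<open>0 < p\<close> by simp
  ultimately have "(2::real) ^ m \<le> of_int q" by linarith
  then have "2 powr real m \<le> real_of_int q" by (simp add: powr_realpow)
  then have "real m \<le> log 2 (of_int q)" using \<open>0 < q\<close> by (simp add: le_log_iff)
  then have "m \<le> nat \<lceil>log 2 (of_int q)\<rceil>" by linarith
  then show ?thesis unfolding rat_size_def pq by simp
qed

lemma rat_size_simps: "rat_size 0 = 0" "rat_size 1 = 1" "rat_size (-1) = 1"
  by (simp_all add: rat_size_def)

definition sign_vec :: "nat \<Rightarrow> (nat \<Rightarrow> bool) \<Rightarrow> nat \<Rightarrow> 'a :: ring_1" where
  "sign_vec n a j = (if j \<le> n then (if a j then 1 else -1) else (if a (j - n) then -1 else 1))"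

lemma of_rat_sign_vec [simp]: "of_rat (sign_vec n a j) = sign_vec n a j"
  by (simp add: sign_vec_def)

lemma sign_vec_complement: "j \<in> {1..n} \<Longrightarrow> sign_vec n a j + sign_vec n a (n + j) = 0"
  by (simp add: sign_vec_def)

lemma sign_vec_lit_var:
  "lit_ok n l \<Longrightarrow> sign_vec n a (lit_var n l) = (if lit_true a l then 1 else -1)"
  by (auto simp: sign_vec_def lit_ok_def lit_var_def lit_true_def)

lemma sign_vec_square [simp]: "(sign_vec n a j) ^ 2 = 1"
  by (simp add: sign_vec_def)

lemma sign_vec_bounds: "-1 \<le> (sign_vec n a j :: real) \<and> (sign_vec n a j :: real) \<le> 1"
  by (simp add: sign_vec_def)

lemma feasible_S_sign_vec:
  fixes \<gamma> \<Delta> s y1 y2 :: real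
  assumes clauses: "\<forall>(l1, l2, l3) \<in> set cls.
      -1 - \<Delta> \<le> sign_vec n a (lit_var n l1) + sign_vec n a (lit_var n l2) + sign_vec n a (lit_var n l3)"
    and "0 \<le> \<gamma>" "0 \<le> \<Delta>" "\<Delta> \<le> 2" "\<Delta> + \<gamma> / 2 \<le> 2" "in_R \<gamma> y1 y2" "in_D n s d"
    and "h y1 y2 \<le> s"
  shows "feasible_S n cls (sign_vec n a) \<gamma> \<Delta> s y1 y2 d"
proof -
  have "(\<Sum>j = 1..n. (sign_vec n a j :: real) ^ 2) = real n" by simp
  moreover have "(real n) ^ 6 = (real n) ^ 5 * real n" by (simp flip: power_Suc2)
  ultimately show ?thesis
    unfolding feasible_S_def
    using assms sign_vec_complement[where 'a = real] sign_vec_bounds by simp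
qed

lemma feasible_Q_exists:
  assumes "1 \<le> n"
  shows "\<exists>x \<gamma> \<Delta> s y1 y2 d. feasible_Q n cls x \<gamma> \<Delta> s y1 y2 d"
proof -
  define s :: real where "s = (1/2) ^ 2 ^ n"
  have "0 < s" "s \<le> 1" by (simp_all add: s_def power_le_one)
  obtain y where "y \<in> \<rat>" and y: "1.2598 \<le> y" "y \<le> 1.26" "\<bar>y ^ 3 - 2\<bar> \<le> s"
    using rat_cube_root_two_approx[OF \<open>0 < s\<close>] by blast
  then obtain q where q: "y = of_rat q" using Rats_cases by blast
  have "h y (y ^ 2) = \<bar>y ^ 3 - 2\<bar> * \<bar>y ^ 3 - 2\<bar>"
    using h_sum_of_squares[of y y] by (simp add: power2_eq_square)
  also have "\<dots> \<le> s * 1" using y \<open>s \<le> 1\<close> by (intro mult_mono) auto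
  finally have "h y (y ^ 2) \<le> s" by simp
  moreover have "1.2598 ^ 2 \<le> y ^ 2" "y ^ 2 \<le> 1.26 ^ 2" using y by (auto intro: power_mono)
  then have "in_R 0 y (y ^ 2)" using y unfolding in_R_def by (simp add: power2_eq_square)
  moreover have "in_D n s (\<lambda>k. (1/2) ^ 2 ^ (k - 1))" using in_D_double_exp[OF assms] s_def by simp
  moreover have "-1 - 2 \<le> sign_vec n a i + sign_vec n a j + (sign_vec n a k :: real)" for a i j k
    using sign_vec_bounds[of n a i] sign_vec_bounds[of n a j] sign_vec_bounds[of n a k] by simp
  ultimately have "feasible_S n cls (sign_vec n (\<lambda>_. True)) 0 2 s y (y ^ 2) (\<lambda>k. (1/2) ^ 2 ^ (k - 1))"
    by (intro feasible_S_sign_vec) auto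
  then have "feasible_Q n cls (sign_vec n (\<lambda>_. True)) 0 2 ((1/2) ^ 2 ^ n) q (q ^ 2)
      (\<lambda>k. (1/2) ^ 2 ^ (k - 1))"
    unfolding feasible_Q_def s_def q by (simp add: of_rat_power of_rat_divide)
  then show ?thesis by blast
qed

lemma feasible_Q_short_of_satisfiable:
  assumes "instance_ok n cls" "satisfiable cls"
  shows "\<exists>x \<gamma> \<Delta> s y1 y2 d. feasible_Q n cls x \<gamma> \<Delta> s y1 y2 d \<and>
    sol_size n x \<gamma> \<Delta> s y1 y2 d = 2 * n + (rat_size 4 + rat_size (-27/10) + rat_size (159/100))"
proof -
  obtain a where a: "\<forall>(l1, l2, l3) \<in> set cls. lit_true a l1 \<or> lit_true a l2 \<or> lit_true a l3"
    using assms(2) unfolding satisfiable_def by blast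
  have "-1 \<le> sign_vec n a (lit_var n l1) + sign_vec n a (lit_var n l2) + (sign_vec n a (lit_var n l3) :: real)"
    if "(l1, l2, l3) \<in> set cls" for l1 l2 l3
  proof -
    have "lit_ok n l1" "lit_ok n l2" "lit_ok n l3" using assms(1) that unfolding instance_ok_def by auto
    with a that show ?thesis by (auto simp: sign_vec_lit_var)
  qed
  moreover have "h (-27/10) (159/100) \<le> 0" by (simp add: h_def power3_eq_cube)
  moreover have "in_R 4 (-27/10) (159/100)" by (simp add: in_R_def)
  moreover have "in_D n 0 (\<lambda>_. 0)" by (simp add: in_D_def)
  ultimately have "feasible_S n cls (sign_vec n a) 4 0 0 (-27/10) (159/100) (\<lambda>_. 0)"
    by (intro feasible_S_sign_vec) auto
  then have "feasible_Q n cls (sign_vec n a) 4 0 0 (-27/10) (159/100) (\<lambda>_. 0)"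
    unfolding feasible_Q_def by (simp add: of_rat_minus of_rat_divide)
  moreover have "rat_size (sign_vec n a j) = 1" for j
    by (simp add: sign_vec_def rat_size_simps)
  then have "sol_size n (sign_vec n a) 4 0 0 (-27/10) (159/100) (\<lambda>_. 0)
      = 2 * n + (rat_size 4 + rat_size (-27/10) + rat_size (159/100))"
    unfolding sol_size_def by (simp add: rat_size_simps)
  ultimately show ?thesis by blast
qed

lemma lit_var_le_of_not_lit_true:
  fixes x :: "nat \<Rightarrow> real"
  assumes "lit_ok n l" "\<not> lit_true (\<lambda>j. 0 < x j) l"
    and "\<forall>j \<in> {1..n}. c \<le> \<bar>x j\<bar>" "\<forall>j \<in> {1..n}. x j + x (n + j) = 0"
  shows "x (lit_var n l) \<le> - c"
proof -
  obtain j b where l: "l = (j, b)" by (cases l)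
  with assms have "c \<le> \<bar>x j\<bar>" "x j + x (n + j) = 0" by (auto simp: lit_ok_def)
  then show ?thesis using assms(2) l by (cases b) (auto simp: lit_var_def lit_true_def)
qed

lemma not_satisfiable_obtains_falsified_clause:
  assumes "\<not> satisfiable cls"
  obtains l1 l2 l3 where "(l1, l2, l3) \<in> set cls"
    "\<not> lit_true a l1" "\<not> lit_true a l2" "\<not> lit_true a l3"
  using assms unfolding satisfiable_def by (metis (no_types, lifting) case_prodI2)

lemma unsatisfiable_clause_sum_le:
  fixes x :: "nat \<Rightarrow> real"
  assumes "instance_ok n cls" "\<not> satisfiable cls"
    and "\<forall>j \<in> {1..n}. c \<le> \<bar>x j\<bar>" "\<forall>j \<in> {1..n}. x j + x (n + j) = 0"
  shows "\<exists>(l1, l2, l3) \<in> set cls. x (lit_var n l1) + x (lit_var n l2) + x (lit_var n l3) \<le> -3 * c"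
proof -
  obtain l1 l2 l3 where c: "(l1, l2, l3) \<in> set cls" and "\<not> lit_true (\<lambda>j. 0 < x j) l1"
    "\<not> lit_true (\<lambda>j. 0 < x j) l2" "\<not> lit_true (\<lambda>j. 0 < x j) l3"
    using not_satisfiable_obtains_falsified_clause[OF assms(2)] .
  moreover have "lit_ok n l1" "lit_ok n l2" "lit_ok n l3"
    using assms(1) c unfolding instance_ok_def by auto
  ultimately have "x (lit_var n l1) \<le> - c" "x (lit_var n l2) \<le> - c" "x (lit_var n l3) \<le> - c"
    using lit_var_le_of_not_lit_true[OF _ _ assms(3,4)] by blast+
  then have "x (lit_var n l1) + x (lit_var n l2) + x (lit_var n l3) \<le> -3 * c" by linarith
  with c show ?thesis by (intro bexI[of _ "(l1, l2, l3)"]) simp_all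
qed

lemma feasible_S_defect_le:
  assumes "feasible_S n cls x \<gamma> \<Delta> s y1 y2 d"
  shows "(real n) ^ 5 * (\<Sum>j = 1..n. 1 - (x j) ^ 2) \<le> s - h y1 y2"
proof -
  have "- ((real n) ^ 5 * (\<Sum>j = 1..n. (x j) ^ 2)) + h y1 y2 - s \<le> - ((real n) ^ 6)"
    using assms unfolding feasible_S_def by (elim conjE)
  moreover have "(real n) ^ 5 * (\<Sum>j = 1..n. 1 - (x j) ^ 2)
      = (real n) ^ 6 - (real n) ^ 5 * (\<Sum>j = 1..n. (x j) ^ 2)"
    by (simp add: sum_subtractf right_diff_distrib flip: power_Suc2)
  ultimately show ?thesis by linarith
qed

lemma feasible_S_abs_le_one:
  assumes "feasible_S n cls x \<gamma> \<Delta> s y1 y2 d" "j \<in> {1..n}"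
  shows "\<bar>x j\<bar> \<le> 1"
proof -
  have "\<forall>j \<in> {1..2 * n}. -1 \<le> x j \<and> x j \<le> 1"
    using assms(1) unfolding feasible_S_def by (elim conjE)
  then show ?thesis using assms(2) by (simp add: abs_le_iff)
qed

lemma abs_ge_of_defect_le:
  fixes x :: "nat \<Rightarrow> real"
  assumes "3 \<le> n" "\<forall>j \<in> {1..n}. \<bar>x j\<bar> \<le> 1"
    and "(real n) ^ 5 * (\<Sum>j = 1..n. 1 - (x j) ^ 2) \<le> B" "j \<in> {1..n}"
  shows "1 - B / 243 \<le> \<bar>x j\<bar>"
proof -
  have nonneg: "\<forall>i \<in> {1..n}. 0 \<le> 1 - (x i) ^ 2" using assms(2) by (simp add: abs_square_le_1)
  have "(3::real) ^ 5 \<le> (real n) ^ 5" using assms(1) by (intro power_mono) auto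
  then have "243 * (1 - (x j) ^ 2) \<le> (real n) ^ 5 * (1 - (x j) ^ 2)"
    using nonneg assms(4) by (intro mult_right_mono) auto
  also have "\<dots> \<le> (real n) ^ 5 * (\<Sum>i = 1..n. 1 - (x i) ^ 2)"
    using nonneg assms(4) by (intro mult_left_mono member_le_sum) auto
  finally have "1 - B / 243 \<le> (x j) ^ 2" using assms(3) by simp
  also have "(x j) ^ 2 = \<bar>x j\<bar> * \<bar>x j\<bar>" by (simp add: power2_eq_square)
  also have "\<dots> \<le> \<bar>x j\<bar>" using assms(2,4) by (intro mult_left_le) auto
  finally show ?thesis .
qed

lemma feasible_S_pos_of_not_satisfiable:
  assumes F: "feasible_S n cls x \<gamma> \<Delta> s y1 y2 d" and n: "3 \<le> n"
    and inst: "instance_ok n cls" and unsat: "\<not> satisfiable cls" and "y1 ^ 3 \<noteq> 2"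
  shows "0 < s"
proof (rule ccontr)
  assume "\<not> 0 < s"
  have compl: "\<forall>j \<in> {1..n}. x j + x (n + j) = 0"
    and clauses: "\<forall>(l1, l2, l3) \<in> set cls. -1 - \<Delta> \<le> x (lit_var n l1) + x (lit_var n l2) + x (lit_var n l3)"
    and "0 \<le> \<Delta>" "\<Delta> + \<gamma> / 2 \<le> 2" "in_R \<gamma> y1 y2" "in_D n s d"
    using F unfolding feasible_S_def by blast+
  have box: "\<forall>j \<in> {1..n}. \<bar>x j\<bar> \<le> 1" using feasible_S_abs_le_one[OF F] by blast
  have "s = 0" using \<open>in_D n s d\<close> \<open>\<not> 0 < s\<close> unfolding in_D_def by auto
  then have defect: "(real n) ^ 5 * (\<Sum>j = 1..n. 1 - (x j) ^ 2) \<le> - h y1 y2"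
    using feasible_S_defect_le[OF F] by simp
  have y2: "1.587 \<le> y2" and y1: "1.259 - \<gamma> \<le> y1" using \<open>in_R \<gamma> y1 y2\<close> unfolding in_R_def by auto
  show False
  proof (cases "0 \<le> y1")
    case True
    have "0 \<le> (real n) ^ 5 * (\<Sum>j = 1..n. 1 - (x j) ^ 2)"
      using box by (intro mult_nonneg_nonneg sum_nonneg) (auto simp: abs_square_le_1)
    with defect have "h y1 y2 \<le> 0" by linarith
    with True y2 have "y1 ^ 3 = 2" by (intro h_nonpos_imp_cube_eq_two) auto
    with \<open>y1 ^ 3 \<noteq> 2\<close> show False by contradiction
  next
    case False
    then have "1.259 < \<gamma>" using y1 by linarith
    have "-2.741 \<le> y1" using y1 \<open>0 \<le> \<Delta>\<close> \<open>\<Delta> + \<gamma> / 2 \<le> 2\<close> by simp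
    with False y2 have "-37.2 \<le> h y1 y2" by (intro h_ge_of_nonpos) auto
    with defect have "\<forall>j \<in> {1..n}. 0.846 \<le> \<bar>x j\<bar>"
      using abs_ge_of_defect_le[OF n box, of "37.2"] by force
    then obtain l1 l2 l3 where "(l1, l2, l3) \<in> set cls"
      and "x (lit_var n l1) + x (lit_var n l2) + x (lit_var n l3) \<le> -3 * 0.846"
      using unsatisfiable_clause_sum_le[OF inst unsat _ compl] by blast
    with clauses have "-1 - \<Delta> \<le> -3 * 0.846" by fastforce
    with \<open>1.259 < \<gamma>\<close> \<open>\<Delta> + \<gamma> / 2 \<le> 2\<close> show False by simp
  qed
qed

lemma sol_size_ge_of_not_satisfiable:
  assumes "3 \<le> n" "instance_ok n cls" "\<not> satisfiable cls" "feasible_Q n cls x \<gamma> \<Delta> s y1 y2 d"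
  shows "2 ^ n \<le> sol_size n x \<gamma> \<Delta> s y1 y2 d"
proof -
  let ?real = "\<lambda>r. (of_rat r :: real)"
  have F: "feasible_S n cls (\<lambda>j. ?real (x j)) (?real \<gamma>) (?real \<Delta>) (?real s) (?real y1) (?real y2)
      (\<lambda>k. ?real (d k))"
    using assms(4) unfolding feasible_Q_def .
  have "?real y1 ^ 3 \<noteq> 2"
    using rat_cube_neq_two[of y1] by (metis of_rat_eq_iff of_rat_numeral_eq of_rat_power)
  then have "0 < s" using feasible_S_pos_of_not_satisfiable[OF F assms(1-3)] by simp
  moreover have "in_D n (?real s) (\<lambda>k. ?real (d k))" using F unfolding feasible_S_def by (elim conjE)
  then have "?real s \<le> 1 / 2 ^ 2 ^ n"
    using in_D_s_le assms(1) by (simp add: power_one_over)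
  ultimately have "2 ^ n \<le> rat_size s" by (rule rat_size_ge_of_le_inverse_power)
  then show ?thesis unfolding sol_size_def by linarith
qed

theorem theorem1:
  shows "(\<forall>n cls. n \<ge> 3 \<longrightarrow> instance_ok n cls \<longrightarrow>
            (\<exists>x \<gamma> \<Delta> s y1 y2 d. feasible_Q n cls x \<gamma> \<Delta> s y1 y2 d))
       \<and> (\<exists>L::nat. \<forall>n cls. n \<ge> 3 \<longrightarrow> instance_ok n cls \<longrightarrow> satisfiable cls \<longrightarrow>
            (\<exists>x \<gamma> \<Delta> s y1 y2 d. feasible_Q n cls x \<gamma> \<Delta> s y1 y2 d \<and>
                 sol_size n x \<gamma> \<Delta> s y1 y2 d \<le> 4 * n + L))
       \<and> (\<forall>n cls. n \<ge> 3 \<longrightarrow> instance_ok n cls \<longrightarrow> \<not> satisfiable cls \<longrightarrow>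
            (\<forall>x \<gamma> \<Delta> s y1 y2 d. feasible_Q n cls x \<gamma> \<Delta> s y1 y2 d \<longrightarrow>
                 sol_size n x \<gamma> \<Delta> s y1 y2 d \<ge> 2 ^ n))"
proof (intro conjI)
  let ?L = "rat_size 4 + rat_size (-27/10) + rat_size (159/100)"
  have "\<exists>x \<gamma> \<Delta> s y1 y2 d. feasible_Q n cls x \<gamma> \<Delta> s y1 y2 d \<and> sol_size n x \<gamma> \<Delta> s y1 y2 d \<le> 4 * n + ?L"
    if "instance_ok n cls" "satisfiable cls" for n cls
    using feasible_Q_short_of_satisfiable[OF that] by fastforce
  then show "\<exists>L::nat. \<forall>n cls. n \<ge> 3 \<longrightarrow> instance_ok n cls \<longrightarrow> satisfiable cls \<longrightarrow>
      (\<exists>x \<gamma> \<Delta> s y1 y2 d. feasible_Q n cls x \<gamma> \<Delta> s y1 y2 d \<and> sol_size n x \<gamma> \<Delta> s y1 y2 d \<le> 4 * n + L)"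
    by blast
qed (use feasible_Q_exists sol_size_ge_of_not_satisfiable in auto)

end
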